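(* Let $k>l\ge0$ be integers, $\theta\in\mathbb{R}$, $\xi=e^{i\theta}$, $f:\mathbb{N}\to[0,\infty)$, and $A=\xi(a^\dagger)^ka^l+\xi^*(a^\dagger)^la^k+f(a^\dagger a)$ with domain $\mathcal{D}_0$. Let $K_\pm=\operatorname{Ran}(A\pm i)^\perp$ and $\psi^\pm\in K_\pm$, with coefficients $c^\pm_n=\langle\phi_n,\psi^\pm\rangle$. Then for all $n\in\mathbb{N}$, $$e^{-i\theta}\beta^{kl}_nc^\pm_{n+(k-l)}+e^{i\theta}\beta^{lk}_nc^\pm_{n-(k-l)}+(f(n)\mp i)c^\pm_n=0,$$ with the convention $c^\pm_m=0$ for $m<0$.
   Context: $\mathbb{N}=\{0,1,2,\dots\}$. $\mathcal{H}$ is a separable complex Hilbert space, inner product antilinear in the first argument, with orthonormal basis $(\phi_n)_{n\in\mathbb{N}}$; $\mathcal{D}_0$ is the set of finite linear combinations of the $\phi_n$. The operators $a,a^\dagger$ have domain $\mathcal{D}_0$ and act by $a\phi_n=\sqrt{n}\,\phi_{n-1}$ ($a\phi_0=0$), $a^\dagger\phi_n=\sqrt{n+1}\,\phi_{n+1}$, extended linearly. $f(a^\dagger a)$ has domain $\mathcal{D}_0$ and $f(a^\dagger a)\phi_n=f(n)\phi_n$. For integers $x$ and $s\ge0$, $(x,s)=x(x+1)\cdots(x+s-1)$ ($=1$ if $s=0$), with the convention $(x,s)=0$ whenever $x$ is a negative integer; for integers $n$ and $k,l\ge0$, $\beta^{kl}_n=\sqrt{(n-l+1,l)(n-l+1,k)}$.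 *)

theory Defs
  imports "HOL-Analysis.Analysis"
begin

text \<open>The Hilbert space H with orthonormal basis phi_n is represented by its
coefficient space l2(N): a vector psi corresponds to c n = <phi_n, psi>.\<close>

definition in_l2 :: "(nat \<Rightarrow> complex) \<Rightarrow> bool" where
  "in_l2 c \<longleftrightarrow> summable (\<lambda>n. (cmod (c n))\<^sup>2)"

definition in_D0 :: "(nat \<Rightarrow> complex) \<Rightarrow> bool" where
  "in_D0 u \<longleftrightarrow> finite {n. u n \<noteq> 0}"

definition l2_inner :: "(nat \<Rightarrow> complex) \<Rightarrow> (nat \<Rightarrow> complex) \<Rightarrow> complex" where
  "l2_inner u v = (\<Sum>n. cnj (u n) * v n)"

text \<open>Annihilation: a phi_n = sqrt n phi_(n-1); in coefficients (a u)_m = sqrt(m+1) u_(m+1).\<close>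
definition ann :: "(nat \<Rightarrow> complex) \<Rightarrow> (nat \<Rightarrow> complex)" where
  "ann u = (\<lambda>m. complex_of_real (sqrt (real (Suc m))) * u (Suc m))"

text \<open>Creation: a^dagger phi_n = sqrt(n+1) phi_(n+1); (a^dagger u)_m = sqrt m u_(m-1), 0 for m = 0.\<close>
definition cre :: "(nat \<Rightarrow> complex) \<Rightarrow> (nat \<Rightarrow> complex)" where
  "cre u = (\<lambda>m. if m = 0 then 0 else complex_of_real (sqrt (real m)) * u (m - 1))"

text \<open>f(a^dagger a) phi_n = f(n) phi_n.\<close>
definition fnum :: "(nat \<Rightarrow> real) \<Rightarrow> (nat \<Rightarrow> complex) \<Rightarrow> (nat \<Rightarrow> complex)" where
  "fnum f u = (\<lambda>m. complex_of_real (f m) * u m)"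

definition opA :: "nat \<Rightarrow> nat \<Rightarrow> real \<Rightarrow> (nat \<Rightarrow> real) \<Rightarrow> (nat \<Rightarrow> complex) \<Rightarrow> (nat \<Rightarrow> complex)" where
  "opA k l \<theta> f u = (\<lambda>m.
      exp (\<i> * complex_of_real \<theta>) * (cre ^^ k) ((ann ^^ l) u) m
    + cnj (exp (\<i> * complex_of_real \<theta>)) * (cre ^^ l) ((ann ^^ k) u) m
    + fnum f u m)"

definition rfac :: "int \<Rightarrow> nat \<Rightarrow> int" where
  "rfac x s = (if x < 0 then 0 else (\<Prod>j<s. x + int j))"

definition beta :: "nat \<Rightarrow> nat \<Rightarrow> int \<Rightarrow> real" where
  "beta k l n = sqrt (real_of_int (rfac (n - int l + 1) l * rfac (n - int l + 1) k))"

end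

theory Submission
  imports Defs
begin

text \<open>Test the orthogonality relation against the basis vector \<open>\<phi>\<^sub>n\<close>. The ladder operators
move \<open>\<phi>\<^sub>n\<close> along the basis, the products of the square-root factors they pick up are exactly
\<open>\<beta>\<^sup>k\<^sup>l\<^sub>n\<close> and \<open>\<beta>\<^sup>l\<^sup>k\<^sub>n\<close>, so \<open>(A \<plusminus> i)\<phi>\<^sub>n\<close> is a combination of three basis vectors and its inner
product with \<open>\<psi>\<^sup>\<plusminus>\<close> is the left-hand side of the recurrence, conjugated. Whenever a shifted
index would be negative the corresponding \<open>\<beta>\<close> vanishes, which accounts for the convention
\<open>c\<^sub>m = 0\<close> for \<open>m < 0\<close>.\<close>

definition basis_vec :: "nat \<Rightarrow> nat \<Rightarrow> complex" where
  "basis_vec n = (\<lambda>m. if m = n then 1 else 0)"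

lemma in_D0_basis_vec: "in_D0 (basis_vec n)"
  unfolding in_D0_def basis_vec_def by simp

lemma ann_scale: "ann (\<lambda>m. a * v m) = (\<lambda>m. a * ann v m)"
  unfolding ann_def by (simp add: fun_eq_iff)

lemma cre_scale: "cre (\<lambda>m. a * v m) = (\<lambda>m. a * cre v m)"
  unfolding cre_def by (simp add: fun_eq_iff)

lemma funpow_cre_scale: "(cre ^^ p) (\<lambda>m. a * v m) = (\<lambda>m. a * (cre ^^ p) v m)"
  by (induction p) (simp_all add: cre_scale)

lemma ann_basis_vec:
  "ann (basis_vec n) = (\<lambda>m. complex_of_real (sqrt (real n)) * basis_vec (n - 1) m)"
  unfolding ann_def basis_vec_def by (auto simp: fun_eq_iff)

lemma cre_basis_vec:
  "cre (basis_vec n) = (\<lambda>m. complex_of_real (sqrt (real (Suc n))) * basis_vec (Suc n) m)"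
  unfolding cre_def basis_vec_def by (auto simp: fun_eq_iff)

lemma funpow_ann_basis_vec:
  "(ann ^^ q) (basis_vec n) =
     (\<lambda>m. complex_of_real (sqrt (\<Prod>i<q. real (n - i))) * basis_vec (n - q) m)"
proof (induction q)
  case 0
  then show ?case by simp
next
  case (Suc q)
  have "(ann ^^ Suc q) (basis_vec n) =
      (\<lambda>m. complex_of_real (sqrt (\<Prod>i<q. real (n - i))) * ann (basis_vec (n - q)) m)"
    by (simp add: Suc ann_scale)
  also have "\<dots> =
      (\<lambda>m. complex_of_real (sqrt (\<Prod>i<Suc q. real (n - i))) * basis_vec (n - Suc q) m)"
    by (simp add: ann_basis_vec fun_eq_iff real_sqrt_mult)
  finally show ?case .
qed

lemma funpow_cre_basis_vec:
  "(cre ^^ p) (basis_vec s) =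
     (\<lambda>m. complex_of_real (sqrt (\<Prod>i<p. real (s + 1 + i))) * basis_vec (s + p) m)"
proof (induction p)
  case 0
  then show ?case by simp
next
  case (Suc p)
  have "(cre ^^ Suc p) (basis_vec s) =
      (\<lambda>m. complex_of_real (sqrt (\<Prod>i<p. real (s + 1 + i))) * cre (basis_vec (s + p)) m)"
    by (simp add: Suc cre_scale)
  also have "\<dots> =
      (\<lambda>m. complex_of_real (sqrt (\<Prod>i<Suc p. real (s + 1 + i))) * basis_vec (s + Suc p) m)"
    by (simp add: cre_basis_vec fun_eq_iff real_sqrt_mult)
  finally show ?case .
qed

lemma beta_eq_0: "n < l \<Longrightarrow> beta k l (int n) = 0"
  by (auto simp: beta_def rfac_def prod_zero_iff intro: bexI[of _ "l - Suc n"])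

lemma rfac_eq_prod: "rfac (int s + 1) p = (\<Prod>i<p. int (s + 1 + i))"
  by (simp add: rfac_def algebra_simps)

lemma sqrt_ladder_factors_eq_beta:
  "sqrt (\<Prod>i<q. real (n - i)) * sqrt (\<Prod>i<p. real (n - q + 1 + i)) = beta p q (int n)"
proof (cases "q \<le> n")
  case True
  then have shift: "int n - int q + 1 = int (n - q) + 1"
    by simp
  have "(\<Prod>i<q. real (n - i)) = (\<Prod>i<q. real (n - q + 1 + (q - Suc i)))"
    using True by (intro prod.cong) auto
  also have "\<dots> = (\<Prod>i<q. real (n - q + 1 + i))"
    by (rule prod.nat_diff_reindex)
  finally show ?thesis
    unfolding beta_def shift rfac_eq_prod by (simp add: real_sqrt_mult)
next
  case False
  then have "(\<Prod>i<q. real (n - i)) = 0"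
    by (auto simp: prod_zero_iff intro: bexI[of _ n])
  with False show ?thesis
    by (simp add: beta_eq_0)
qed

lemma funpow_cre_funpow_ann_basis_vec:
  "(cre ^^ p) ((ann ^^ q) (basis_vec n)) =
     (\<lambda>m. complex_of_real (beta p q (int n)) * basis_vec (n - q + p) m)"
  by (simp add: funpow_ann_basis_vec funpow_cre_scale funpow_cre_basis_vec fun_eq_iff
      sqrt_ladder_factors_eq_beta[symmetric])

lemma opA_basis_vec:
  assumes "l \<le> k"
  shows "opA k l \<theta> f (basis_vec n) =
    (\<lambda>m. exp (\<i> * complex_of_real \<theta>) * complex_of_real (beta k l (int n))
           * basis_vec (n + (k - l)) m
       + cnj (exp (\<i> * complex_of_real \<theta>)) * complex_of_real (beta l k (int n))
           * basis_vec (n - (k - l)) m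
       + complex_of_real (f n) * basis_vec n m)"
proof -
  \<comment> \<open>The truncated indices \<open>n - l + k\<close> and \<open>n - k + l\<close> are only wrong where \<open>\<beta>\<close> vanishes.\<close>
  have raise: "complex_of_real (beta k l (int n)) * basis_vec (n - l + k) m =
      complex_of_real (beta k l (int n)) * basis_vec (n + (k - l)) m" for m
    using assms by (cases "l \<le> n") (simp_all add: beta_eq_0)
  have lower: "complex_of_real (beta l k (int n)) * basis_vec (n - k + l) m =
      complex_of_real (beta l k (int n)) * basis_vec (n - (k - l)) m" for m
    using assms by (cases "k \<le> n") (simp_all add: beta_eq_0)
  have "fnum f (basis_vec n) = (\<lambda>m. complex_of_real (f n) * basis_vec n m)"
    by (simp add: fnum_def basis_vec_def fun_eq_iff)
  then show ?thesis
    by (simp add: opA_def funpow_cre_funpow_ann_basis_vec fun_eq_iff mult.assoc raise lower)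
qed

lemma scaled_basis_vec_inner_sums: "(\<lambda>m. cnj (a * basis_vec p m) * c m) sums (cnj a * c p)"
proof -
  have "(\<lambda>m. cnj (a * basis_vec p m) * c m) = (\<lambda>m. if m = p then cnj a * c m else 0)"
    by (auto simp: basis_vec_def fun_eq_iff)
  then show ?thesis
    using sums_single[of p "\<lambda>m. cnj a * c m"] by simp
qed

lemma l2_inner_basis_vec_combination:
  "l2_inner (\<lambda>m. a * basis_vec p m + b * basis_vec q m + d * basis_vec r m) c =
     cnj a * c p + cnj b * c q + cnj d * c r"
  unfolding l2_inner_def
  by (rule sums_unique[symmetric])
    (use sums_add[OF sums_add[OF scaled_basis_vec_inner_sums scaled_basis_vec_inner_sums]
        scaled_basis_vec_inner_sums] in \<open>simp add: distrib_right\<close>)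

theorem lemma4p6:
  fixes k l :: nat and \<theta> :: real and f :: "nat \<Rightarrow> real"
    and \<sigma> :: real and c :: "nat \<Rightarrow> complex"
  assumes "l < k"
    and "\<And>n. f n \<ge> 0"
    and "\<sigma> \<in> {1, -1}"
    and "in_l2 c"
    and "\<And>u. in_D0 u \<Longrightarrow>
           l2_inner (\<lambda>m. opA k l \<theta> f u m + complex_of_real \<sigma> * \<i> * u m) c = 0"
  shows "\<forall>n::nat.
    exp (- (\<i> * complex_of_real \<theta>)) * complex_of_real (beta k l (int n)) * c (n + (k - l))
  + exp (\<i> * complex_of_real \<theta>) * complex_of_real (beta l k (int n))
      * (if k - l \<le> n then c (n - (k - l)) else 0)
  + (complex_of_real (f n) - complex_of_real \<sigma> * \<i>) * c n = 0"
proof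
  fix n
  define \<xi> where "\<xi> = exp (\<i> * complex_of_real \<theta>)"
  have "0 = l2_inner (\<lambda>m. opA k l \<theta> f (basis_vec n) m + complex_of_real \<sigma> * \<i> * basis_vec n m) c"
    using assms(5) in_D0_basis_vec by simp
  also have "\<dots> = l2_inner (\<lambda>m.
        (\<xi> * complex_of_real (beta k l (int n))) * basis_vec (n + (k - l)) m
      + (cnj \<xi> * complex_of_real (beta l k (int n))) * basis_vec (n - (k - l)) m
      + (complex_of_real (f n) + complex_of_real \<sigma> * \<i>) * basis_vec n m) c"
    using assms(1) by (simp add: opA_basis_vec \<xi>_def algebra_simps)
  also have "\<dots> = cnj \<xi> * complex_of_real (beta k l (int n)) * c (n + (k - l))
      + \<xi> * complex_of_real (beta l k (int n)) * c (n - (k - l))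
      + (complex_of_real (f n) - complex_of_real \<sigma> * \<i>) * c n"
    by (simp add: l2_inner_basis_vec_combination)
  finally have "\<dots> = 0" ..
  moreover have "cnj \<xi> = exp (- (\<i> * complex_of_real \<theta>))"
    by (simp add: \<xi>_def exp_cnj)
  moreover have "beta l k (int n) = 0" if "\<not> k - l \<le> n"
    using that by (simp add: beta_eq_0)
  ultimately show "exp (- (\<i> * complex_of_real \<theta>)) * complex_of_real (beta k l (int n)) * c (n + (k - l))
  + exp (\<i> * complex_of_real \<theta>) * complex_of_real (beta l k (int n))
      * (if k - l \<le> n then c (n - (k - l)) else 0)
  + (complex_of_real (f n) - complex_of_real \<sigma> * \<i>) * c n = 0"
    by (cases "k - l \<le> n") (simp_all add: \<xi>_def)
qed

end
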